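(* Let $g^{ij}(x)$ and $\Gamma^{ij}_k(x)$, $i,j,k=1,\dots,n$, be functions of coordinates $x^1,\dots,x^n$ which satisfy conditions (i)–(v) of the context (no non-degeneracy of $g$ assumed). Suppose that all components $g^{ij}$ and $\Gamma^{ij}_k$ depend linearly (i.e. affinely) on one coordinate $x^\bullet$, that is $\partial_\bullet^2g^{ij}=0$ and $\partial_\bullet^2\Gamma^{ij}_k=0$, where $\partial_\bullet=\partial/\partial x^\bullet$. Then for every constant $\lambda$ the pair $$\big(g^{ij}+\lambda\,\partial_\bullet g^{ij},\ \Gamma^{ij}_k+\lambda\,\partial_\bullet\Gamma^{ij}_k\big)$$ also satisfies conditions (i)–(v). Consequently the pairs $(g,\Gamma)$ and $(\partial_\bullet g,\partial_\bullet\Gamma)$ define compatible (possibly degenerate) Hamiltonian structures of hydrodynamic type, i.e. a bi-Hamiltonian structure.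
   Context: Conditions on a pair $(g^{ij},\Gamma^{ij}_k)$ (summation over repeated indices): (i) $g^{ij}=g^{ji}$; (ii) $\partial g^{ij}/\partial x^k=\Gamma^{ij}_k+\Gamma^{ji}_k$; (iii) $g^{ij}\Gamma^{rs}_i=g^{ri}\Gamma^{js}_i$; (iv) $\Gamma^{ij}_t\Gamma^{tk}_r-\Gamma^{ik}_t\Gamma^{tj}_r=g^{ti}\big(\partial\Gamma^{jk}_r/\partial x^t-\partial\Gamma^{jk}_t/\partial x^r\big)$; (v) $\sum_{\text{cyclic in }i,j,k}\Big[\big(\frac{\partial\Gamma^{ij}_t}{\partial x^q}-\frac{\partial\Gamma^{ij}_q}{\partial x^t}\big)\Gamma^{tk}_r+\big(\frac{\partial\Gamma^{ij}_t}{\partial x^r}-\frac{\partial\Gamma^{ij}_r}{\partial x^t}\big)\Gamma^{tk}_q\Big]=0$. These are necessary and sufficient for the bracket $\{x^i(\sigma),x^j(\sigma')\}=g^{ij}\delta'(\sigma-\sigma')+\Gamma^{ij}_kx^k_\sigma\delta(\sigma-\sigma')$ of fields $x^i(\sigma)$ to be Poisson (a "Hamiltonian structure", possibly degenerate). Two such structures are compatible if every linear combination $\{,\}_1+\lambda\{,\}_2$ is again a Hamiltonian structure. *)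

theory Defs
  imports "HOL-Analysis.Analysis"
begin

text \<open>Coordinates x = (x^1,...,x^n) are points of real ^ 'n (the index type 'n is an
arbitrary finite type, n = CARD('n)).  Partial derivative in the k-th coordinate:\<close>

definition pd :: "'n::finite \<Rightarrow> (real^'n \<Rightarrow> real) \<Rightarrow> real^'n \<Rightarrow> real" where
  "pd k f x = deriv (\<lambda>t. f (x + t *\<^sub>R axis k 1)) 0"

definition C2 :: "(real^'n::finite \<Rightarrow> real) \<Rightarrow> bool" where
  "C2 f \<longleftrightarrow> (\<forall>x. f differentiable (at x)) \<and>
            (\<forall>k x. pd k f differentiable (at x)) \<and>
            (\<forall>k l. continuous_on UNIV (pd l (pd k f)))"

text \<open>Conditions (i)-(v) on a pair (g, Gamma), where g i j = g^{ij} and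
Gamma i j k = Gamma^{ij}_k.\<close>

definition hydro_conditions ::
  "('n::finite \<Rightarrow> 'n \<Rightarrow> real^'n \<Rightarrow> real) \<Rightarrow> ('n \<Rightarrow> 'n \<Rightarrow> 'n \<Rightarrow> real^'n \<Rightarrow> real) \<Rightarrow> bool" where
  "hydro_conditions g \<Gamma> \<longleftrightarrow>
     (\<forall>x i j. g i j x = g j i x) \<and>
     (\<forall>x i j k. pd k (g i j) x = \<Gamma> i j k x + \<Gamma> j i k x) \<and>
     (\<forall>x j r s. (\<Sum>i\<in>UNIV. g i j x * \<Gamma> r s i x) = (\<Sum>i\<in>UNIV. g r i x * \<Gamma> j s i x)) \<and>
     (\<forall>x i j k r.
        (\<Sum>t\<in>UNIV. \<Gamma> i j t x * \<Gamma> t k r x - \<Gamma> i k t x * \<Gamma> t j r x)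
        = (\<Sum>t\<in>UNIV. g t i x * (pd t (\<Gamma> j k r) x - pd r (\<Gamma> j k t) x))) \<and>
     (\<forall>x i j k q r.
        (let T = (\<lambda>i j k. \<Sum>t\<in>UNIV.
                    (pd q (\<Gamma> i j t) x - pd t (\<Gamma> i j q) x) * \<Gamma> t k r x
                  + (pd r (\<Gamma> i j t) x - pd t (\<Gamma> i j r) x) * \<Gamma> t k q x)
         in T i j k + T j k i + T k i j = 0))"

definition compatible ::
  "('n::finite \<Rightarrow> 'n \<Rightarrow> real^'n \<Rightarrow> real) \<Rightarrow> ('n \<Rightarrow> 'n \<Rightarrow> 'n \<Rightarrow> real^'n \<Rightarrow> real) \<Rightarrow>
   ('n \<Rightarrow> 'n \<Rightarrow> real^'n \<Rightarrow> real) \<Rightarrow> ('n \<Rightarrow> 'n \<Rightarrow> 'n \<Rightarrow> real^'n \<Rightarrow> real) \<Rightarrow> bool" where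
  "compatible g1 \<Gamma>1 g2 \<Gamma>2 \<longleftrightarrow>
     hydro_conditions g1 \<Gamma>1 \<and> hydro_conditions g2 \<Gamma>2 \<and>
     (\<forall>c::real. hydro_conditions (\<lambda>i j x. g1 i j x + c * g2 i j x)
                                   (\<lambda>i j k x. \<Gamma>1 i j k x + c * \<Gamma>2 i j k x))"

end

theory Submission
  imports Defs
begin

text \<open>Because the data are affine in \<open>x\<^sup>b\<close>, the pair \<open>(g + \<lambda> \<partial>\<^sub>b g, \<Gamma> + \<lambda> \<partial>\<^sub>b \<Gamma>)\<close>
is just \<open>(g, \<Gamma>)\<close> pulled back along the translation \<open>x \<mapsto> x + \<lambda> e\<^sub>b\<close>, and conditions
(i)-(v) are translation invariant. Conditions (i), (ii)
are linear and (iii)-(v) quadratic in the pair, so comparing the pencil at \<open>\<lambda> = 0, 1, -1\<close>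
isolates the coefficients of \<open>\<lambda>\<close> resp. \<open>\<lambda>\<^sup>2\<close>, which are the conditions for
\<open>(\<partial>\<^sub>b g, \<partial>\<^sub>b \<Gamma>)\<close>.\<close>

lemma pd_line_has_real_derivative:
  fixes f :: "real^'n::finite \<Rightarrow> real"
  assumes "f differentiable at (x + t *\<^sub>R axis k 1)"
  shows "((\<lambda>s. f (x + s *\<^sub>R axis k 1)) has_real_derivative pd k f (x + t *\<^sub>R axis k 1)) (at t)"
proof -
  define \<phi> where "\<phi> = (\<lambda>s. f (x + s *\<^sub>R axis k 1))"
  have "(\<lambda>s::real. x + s *\<^sub>R axis k 1) differentiable at t"
    by (intro derivative_intros)
  then have "\<phi> differentiable at t"
    unfolding \<phi>_def using differentiable_chain_at[of "\<lambda>s. x + s *\<^sub>R axis k 1" t f] assms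
    by (simp add: o_def)
  then have d: "(\<phi> has_real_derivative deriv \<phi> t) (at t)"
    using DERIV_deriv_iff_real_differentiable by blast
  then have "((\<lambda>s. \<phi> (s + t)) has_real_derivative deriv \<phi> t) (at 0)"
    using DERIV_shift[of \<phi> "deriv \<phi> t" 0 t] by simp
  moreover have "(\<lambda>s. \<phi> (s + t)) = (\<lambda>s. f ((x + t *\<^sub>R axis k 1) + s *\<^sub>R axis k 1))"
    unfolding \<phi>_def by (simp add: algebra_simps)
  ultimately have "pd k f (x + t *\<^sub>R axis k 1) = deriv \<phi> t"
    unfolding pd_def by (metis DERIV_imp_deriv)
  with d show ?thesis
    unfolding \<phi>_def by simp
qed

lemma pd_add_scaled:
  fixes f h :: "real^'n::finite \<Rightarrow> real"
  assumes "f differentiable at x" and "h differentiable at x"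
  shows "pd k (\<lambda>y. f y + c * h y) x = pd k f x + c * pd k h x"
proof -
  have "((\<lambda>t. f (x + t *\<^sub>R axis k 1) + c * h (x + t *\<^sub>R axis k 1)) has_real_derivative
          pd k f x + c * pd k h x) (at 0)"
    using pd_line_has_real_derivative[of f x 0 k] pd_line_has_real_derivative[of h x 0 k] assms
    by (auto intro!: derivative_eq_intros)
  then show ?thesis
    unfolding pd_def by (rule DERIV_imp_deriv)
qed

lemma pd_translate: "pd k (\<lambda>y. f (y + v)) x = pd k f (x + v)"
  unfolding pd_def by (simp add: add_ac)

lemma affine_along_axis:
  fixes f :: "real^'n::finite \<Rightarrow> real"
  assumes f: "\<And>y. f differentiable at y"
    and pd_f: "\<And>y. pd b f differentiable at y"
    and pd_pd_f: "\<And>y. pd b (pd b f) y = 0"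
  shows "f (x + c *\<^sub>R axis b 1) = f x + c * pd b f x"
proof -
  define \<psi> where "\<psi> = (\<lambda>t. pd b f (x + t *\<^sub>R axis b 1))"
  have "(\<psi> has_real_derivative 0) (at t)" for t
    using pd_line_has_real_derivative[where f="pd b f" and x=x and t=t and k=b] pd_f pd_pd_f
    unfolding \<psi>_def by simp
  then have \<psi>_const: "\<psi> t = \<psi> 0" for t
    using DERIV_isconst_all by blast
  have "((\<lambda>t. f (x + t *\<^sub>R axis b 1) - t * \<psi> 0) has_real_derivative 0) (at t)" for t
  proof -
    have "((\<lambda>t. f (x + t *\<^sub>R axis b 1) - t * \<psi> 0) has_real_derivative \<psi> t - \<psi> 0) (at t)"
      using pd_line_has_real_derivative[where f=f and x=x and t=t and k=b] f unfolding \<psi>_def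
      by (auto intro!: derivative_eq_intros)
    then show ?thesis
      using \<psi>_const[of t] by simp
  qed
  then have "f (x + c *\<^sub>R axis b 1) - c * \<psi> 0 = f (x + 0 *\<^sub>R axis b 1) - 0 * \<psi> 0"
    using DERIV_isconst_all by blast
  then show ?thesis
    unfolding \<psi>_def by simp
qed

lemma hydro_conditions_translate:
  assumes "hydro_conditions g \<Gamma>"
  shows "hydro_conditions (\<lambda>i j x. g i j (x + v)) (\<lambda>i j k x. \<Gamma> i j k (x + v))"
  using assms unfolding hydro_conditions_def pd_translate Let_def
  by (intro conjI allI) fast+

lemma hydro_conditionsD:
  assumes "hydro_conditions g \<Gamma>"
  shows "g i j x = g j i x"
    and "pd k (g i j) x = \<Gamma> i j k x + \<Gamma> j i k x"
    and "(\<Sum>i\<in>UNIV. g i j x * \<Gamma> r s i x) = (\<Sum>i\<in>UNIV. g r i x * \<Gamma> j s i x)"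
    and "(\<Sum>t\<in>UNIV. \<Gamma> i j t x * \<Gamma> t k r x - \<Gamma> i k t x * \<Gamma> t j r x)
         = (\<Sum>t\<in>UNIV. g t i x * (pd t (\<Gamma> j k r) x - pd r (\<Gamma> j k t) x))"
    and "let T = (\<lambda>i j k. \<Sum>t\<in>UNIV.
                    (pd q (\<Gamma> i j t) x - pd t (\<Gamma> i j q) x) * \<Gamma> t k r x
                  + (pd r (\<Gamma> i j t) x - pd t (\<Gamma> i j r) x) * \<Gamma> t k q x)
         in T i j k + T j k i + T k i j = 0"
  using assms unfolding hydro_conditions_def by fast+

lemma hydro_conditions_pencil_coefficient:
  fixes g\<^sub>1 g\<^sub>2 :: "'n::finite \<Rightarrow> 'n \<Rightarrow> real^'n \<Rightarrow> real"
    and \<Gamma>\<^sub>1 \<Gamma>\<^sub>2 :: "'n \<Rightarrow> 'n \<Rightarrow> 'n \<Rightarrow> real^'n \<Rightarrow> real"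
  assumes dg\<^sub>1: "\<And>i j x. g\<^sub>1 i j differentiable at x"
    and dg\<^sub>2: "\<And>i j x. g\<^sub>2 i j differentiable at x"
    and d\<Gamma>\<^sub>1: "\<And>i j k x. \<Gamma>\<^sub>1 i j k differentiable at x"
    and d\<Gamma>\<^sub>2: "\<And>i j k x. \<Gamma>\<^sub>2 i j k differentiable at x"
    and pencil: "\<And>c. hydro_conditions (\<lambda>i j x. g\<^sub>1 i j x + c * g\<^sub>2 i j x)
                                        (\<lambda>i j k x. \<Gamma>\<^sub>1 i j k x + c * \<Gamma>\<^sub>2 i j k x)"
  shows "hydro_conditions g\<^sub>2 \<Gamma>\<^sub>2"
proof -
  define G where "G c i j = (\<lambda>x. g\<^sub>1 i j x + c * g\<^sub>2 i j x)" for c i j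
  define \<Gamma> where "\<Gamma> c i j k = (\<lambda>x. \<Gamma>\<^sub>1 i j k x + c * \<Gamma>\<^sub>2 i j k x)" for c i j k
  have H: "hydro_conditions (G c) (\<Gamma> c)" for c
    unfolding G_def \<Gamma>_def by (rule pencil)
  note pd_pencil = pd_add_scaled[OF dg\<^sub>1 dg\<^sub>2] pd_add_scaled[OF d\<Gamma>\<^sub>1 d\<Gamma>\<^sub>2]
  show ?thesis
    unfolding hydro_conditions_def Let_def
  proof (intro conjI allI)
    fix x i j
    have "G c i j x = G c j i x" for c
      by (rule hydro_conditionsD(1)[OF H])
    from this[of 1] this[of 0] show "g\<^sub>2 i j x = g\<^sub>2 j i x"
      unfolding G_def by simp
  next
    fix x i j k
    have "pd k (G c i j) x = \<Gamma> c i j k x + \<Gamma> c j i k x" for c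
      by (rule hydro_conditionsD(2)[OF H])
    from this[of 1] this[of 0] show "pd k (g\<^sub>2 i j) x = \<Gamma>\<^sub>2 i j k x + \<Gamma>\<^sub>2 j i k x"
      unfolding G_def \<Gamma>_def pd_pencil by simp
  next
    fix x j r s
    have "(\<Sum>i\<in>UNIV. G c i j x * \<Gamma> c r s i x) = (\<Sum>i\<in>UNIV. G c r i x * \<Gamma> c j s i x)" for c
      by (rule hydro_conditionsD(3)[OF H])
    from this[of 1] this[of "-1"] this[of 0]
    show "(\<Sum>i\<in>UNIV. g\<^sub>2 i j x * \<Gamma>\<^sub>2 r s i x) = (\<Sum>i\<in>UNIV. g\<^sub>2 r i x * \<Gamma>\<^sub>2 j s i x)"
      unfolding G_def \<Gamma>_def pd_pencil by (simp add: algebra_simps sum.distrib sum_subtractf)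
  next
    fix x i j k r
    have "(\<Sum>t\<in>UNIV. \<Gamma> c i j t x * \<Gamma> c t k r x - \<Gamma> c i k t x * \<Gamma> c t j r x)
        = (\<Sum>t\<in>UNIV. G c t i x * (pd t (\<Gamma> c j k r) x - pd r (\<Gamma> c j k t) x))" for c
      by (rule hydro_conditionsD(4)[OF H])
    from this[of 1] this[of "-1"] this[of 0]
    show "(\<Sum>t\<in>UNIV. \<Gamma>\<^sub>2 i j t x * \<Gamma>\<^sub>2 t k r x - \<Gamma>\<^sub>2 i k t x * \<Gamma>\<^sub>2 t j r x)
        = (\<Sum>t\<in>UNIV. g\<^sub>2 t i x * (pd t (\<Gamma>\<^sub>2 j k r) x - pd r (\<Gamma>\<^sub>2 j k t) x))"
      unfolding G_def \<Gamma>_def pd_pencil by (simp add: algebra_simps sum.distrib sum_subtractf)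
  next
    fix x i j k q r
    define T where "T c i j k = (\<Sum>t\<in>UNIV.
        (pd q (\<Gamma> c i j t) x - pd t (\<Gamma> c i j q) x) * \<Gamma> c t k r x
      + (pd r (\<Gamma> c i j t) x - pd t (\<Gamma> c i j r) x) * \<Gamma> c t k q x)" for c i j k
    have "T c i j k + T c j k i + T c k i j = 0" for c
      using hydro_conditionsD(5)[OF H, where x=x and q=q and r=r] unfolding T_def Let_def .
    from this[of 1] this[of "-1"] this[of 0]
    show "(\<Sum>t\<in>UNIV. (pd q (\<Gamma>\<^sub>2 i j t) x - pd t (\<Gamma>\<^sub>2 i j q) x) * \<Gamma>\<^sub>2 t k r x
                    + (pd r (\<Gamma>\<^sub>2 i j t) x - pd t (\<Gamma>\<^sub>2 i j r) x) * \<Gamma>\<^sub>2 t k q x)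
        + (\<Sum>t\<in>UNIV. (pd q (\<Gamma>\<^sub>2 j k t) x - pd t (\<Gamma>\<^sub>2 j k q) x) * \<Gamma>\<^sub>2 t i r x
                    + (pd r (\<Gamma>\<^sub>2 j k t) x - pd t (\<Gamma>\<^sub>2 j k r) x) * \<Gamma>\<^sub>2 t i q x)
        + (\<Sum>t\<in>UNIV. (pd q (\<Gamma>\<^sub>2 k i t) x - pd t (\<Gamma>\<^sub>2 k i q) x) * \<Gamma>\<^sub>2 t j r x
                    + (pd r (\<Gamma>\<^sub>2 k i t) x - pd t (\<Gamma>\<^sub>2 k i r) x) * \<Gamma>\<^sub>2 t j q x) = 0"
      unfolding T_def \<Gamma>_def pd_pencil by (simp add: algebra_simps sum.distrib sum_subtractf)
  qed
qed

theorem lemma8: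
  fixes g :: "'n::finite \<Rightarrow> 'n \<Rightarrow> real^'n \<Rightarrow> real"
    and \<Gamma> :: "'n \<Rightarrow> 'n \<Rightarrow> 'n \<Rightarrow> real^'n \<Rightarrow> real"
    and b :: 'n
  assumes reg_g: "\<And>i j. C2 (g i j)"
    and reg_\<Gamma>: "\<And>i j k. C2 (\<Gamma> i j k)"
    and hs: "hydro_conditions g \<Gamma>"
    and lin_g: "\<And>i j x. pd b (pd b (g i j)) x = 0"
    and lin_\<Gamma>: "\<And>i j k x. pd b (pd b (\<Gamma> i j k)) x = 0"
  shows "(\<forall>c::real. hydro_conditions (\<lambda>i j x. g i j x + c * pd b (g i j) x)
                                    (\<lambda>i j k x. \<Gamma> i j k x + c * pd b (\<Gamma> i j k) x))
         \<and> compatible g \<Gamma> (\<lambda>i j. pd b (g i j)) (\<lambda>i j k. pd b (\<Gamma> i j k))"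
proof -
  have dg: "g i j differentiable at x" "pd b (g i j) differentiable at x" for i j x
    using reg_g[of i j] unfolding C2_def by auto
  have d\<Gamma>: "\<Gamma> i j k differentiable at x" "pd b (\<Gamma> i j k) differentiable at x" for i j k x
    using reg_\<Gamma>[of i j k] unfolding C2_def by auto
  have pencil: "hydro_conditions (\<lambda>i j x. g i j x + c * pd b (g i j) x)
                                 (\<lambda>i j k x. \<Gamma> i j k x + c * pd b (\<Gamma> i j k) x)" for c
    using hydro_conditions_translate[OF hs, of "c *\<^sub>R axis b 1"]
    by (simp add: affine_along_axis[OF dg lin_g] affine_along_axis[OF d\<Gamma> lin_\<Gamma>])
  moreover have "hydro_conditions (\<lambda>i j. pd b (g i j)) (\<lambda>i j k. pd b (\<Gamma> i j k))"
    using dg d\<Gamma> pencil by (rule hydro_conditions_pencil_coefficient)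
  ultimately show ?thesis
    unfolding compatible_def using hs by blast
qed

end
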